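(* Let $\alpha,\alpha',\beta,\beta',\tau,\kappa>0$ be real numbers satisfying $$\kappa\log\Big(\frac{1}{\tau}-1\Big)>\log 2+1,\qquad 0<\tau<\tfrac13,\qquad 0<\kappa<1,$$ $$\frac{1}{\alpha}+\frac{1}{\alpha'}<1,\qquad \gamma:=1-\frac{1}{\beta}-\frac{1}{\beta'}>0.$$ Then for every integer $M>0$, every real $C>0$, every channel $W$ with input alphabet $\mathcal X$ and output alphabet $\mathcal Y$, and every probability distribution $p$ on $\mathcal X$ such that $$\beta\,\mathrm{E}_{p}\,W_x\Big\{y : \tfrac{W_x(y)}{W_p(y)}\le C\Big\}+\alpha'\beta'\frac{1}{C}\Big\lceil\frac{M}{\gamma}\Big\rceil<1,$$ there exists an identification code $\Phi$ for $W$ with $$\mu(\Phi)\le \alpha\beta\,\mathrm{E}_{p}\,W_x\Big\{y: \tfrac{W_x(y)}{W_p(y)}\le C\Big\},\qquad \lambda(\Phi)\le \kappa+\alpha'\beta'\frac{1}{C}\Big\lceil\frac{M}{\gamma}\Big\rceil,\qquad |\Phi|=\Big\lfloor\frac{e^{\tau M}}{Me}\Big\rfloor.$$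
   Context: A channel $W$ from a finite or countable set $\mathcal X$ to a finite or countable set $\mathcal Y$ is a map $x\mapsto W_x$ assigning to each $x\in\mathcal X$ a probability distribution $W_x$ on $\mathcal Y$. For a distribution $p$ on $\mathcal X$, $W_p(y):=\sum_x p(x)W_x(y)$, and $\frac{W_x}{W_p}(y):=W_x(y)/W_p(y)$. $\mathrm{E}_p$ denotes expectation over $x$ distributed according to $p$; for a set $A\subset\mathcal Y$, $W_x\{A\}=W_x(A)=\sum_{y\in A}W_x(y)$. An identification code for $W$ is a triple $\Phi=(N,\{Q_1,\dots,Q_N\},\{\mathcal D_1,\dots,\mathcal D_N\})$ where $N$ is a positive integer, $Q_1,\dots,Q_N$ are probability distributions on $\mathcal X$, and $\mathcal D_1,\dots,\mathcal D_N\subset\mathcal Y$ are subsets (not necessarily disjoint). Its size is $|\Phi|:=N$, and its error probabilities are $\mu(\Phi):=\max_i W_{Q_i}(\mathcal D_i^c)$ and $\lambda(\Phi):=\max_{i\ne j}W_{Q_j}(\mathcal D_i)$, where $\mathcal D_i^c$ is the complement of $\mathcal D_i$ in $\mathcal Y$. *)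

theory Defs
  imports "HOL-Probability.Probability"
begin

text \<open>A channel from a countable type 'x to a countable type 'y is a map
  W :: 'x \<Rightarrow> 'y pmf.  For an input distribution p, W_p is the output distribution.\<close>

definition out_dist :: "('x \<Rightarrow> 'y pmf) \<Rightarrow> 'x pmf \<Rightarrow> 'y pmf" where
  "out_dist W p = bind_pmf p W"

definition info_tail :: "('x \<Rightarrow> 'y pmf) \<Rightarrow> 'x pmf \<Rightarrow> real \<Rightarrow> real" where
  "info_tail W p C = measure_pmf.expectation p
     (\<lambda>x. measure_pmf.prob (W x) {y. pmf (W x) y / pmf (out_dist W p) y \<le> C})"

text \<open>An identification code (N, Q_1..Q_N, D_1..D_N), indices 1..N.
  Its error probabilities mu and lambda (maximum; 0 for an empty index set).\<close>
definition id_mu :: "('x \<Rightarrow> 'y pmf) \<Rightarrow> nat \<Rightarrow> (nat \<Rightarrow> 'x pmf) \<Rightarrow> (nat \<Rightarrow> 'y set) \<Rightarrow> real" where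
  "id_mu W N Q D = Max ({measure_pmf.prob (out_dist W (Q i)) (- D i) | i. i \<in> {1..N}} \<union> {0})"

definition id_lambda :: "('x \<Rightarrow> 'y pmf) \<Rightarrow> nat \<Rightarrow> (nat \<Rightarrow> 'x pmf) \<Rightarrow> (nat \<Rightarrow> 'y set) \<Rightarrow> real" where
  "id_lambda W N Q D = Max ({measure_pmf.prob (out_dist W (Q j)) (D i) | i j.
       i \<in> {1..N} \<and> j \<in> {1..N} \<and> i \<noteq> j} \<union> {0})"

end

theory Submission
  imports Defs
begin

text \<open>Random coding with expurgation gives a transmission code with about \<open>\<gamma> K\<close> codewords,
  \<open>K = \<lceil>M / \<gamma>\<rceil>\<close>, in which the codeword \<open>x\<close> is decoded on the set where \<open>W\<^sub>x / W\<^sub>p > C\<close>.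
  By Markov's inequality its miss probability is at most \<open>\<beta>\<close> times the expected tail
  \<open>E\<^sub>p W\<^sub>x{W\<^sub>x / W\<^sub>p \<le> C}\<close>, and since \<open>W\<^sub>p{W\<^sub>x / W\<^sub>p > C} \<le> 1 / C\<close>, the mass it puts on all
  other decoding sets together is at most \<open>\<beta>' (K - 1) / C\<close>.  Arrange \<open>m b\<close> of these codewords
  in \<open>m = M div b\<close> rows of \<open>b = \<lfloor>1 / \<tau>\<rfloor>\<close> columns.  A greedy (Gilbert-Varshamov) choice gives
  \<open>N = \<lfloor>exp (\<tau> M) / (M e)\<rfloor>\<close> words of length \<open>m\<close> over \<open>b\<close> letters, any two agreeing in at
  most \<open>\<kappa> m\<close> positions; this is where \<open>\<kappa> ln (1 / \<tau> - 1) > ln 2 + 1\<close> enters.  Message \<open>k\<close>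
  sends the codeword in a uniformly random row \<open>i\<close> and column \<open>w\<^sub>k i\<close> and is accepted on the
  union of the decoding sets of its \<open>m\<close> codewords, so another message is accepted only through an
  agreeing row (probability \<open>\<le> \<kappa>\<close>) or through confusion (\<open>\<le> \<beta>' (K - 1) / C\<close>).\<close>

lemma measure_bind_pmf:
  "measure_pmf.prob (bind_pmf q N) S = measure_pmf.expectation q (\<lambda>x. measure_pmf.prob (N x) S)"
  unfolding measure_pmf_bind
  by (rule measure_pmf.measure_bind[where N="count_space UNIV"])
     (auto simp: measure_pmf_in_subprob_algebra)

lemma expectation_bind_pmf:
  fixes g :: "'b \<Rightarrow> real"
  assumes "\<And>y. \<bar>g y\<bar> \<le> B"
  shows "measure_pmf.expectation (bind_pmf q N) g
       = measure_pmf.expectation q (\<lambda>x. measure_pmf.expectation (N x) g)"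
  unfolding measure_pmf_bind using assms
  by (intro integral_bind[where K="count_space UNIV" and B=B and B'=1])
     (auto simp: measure_pmf_in_subprob_algebra intro: measure_pmf.finite_measure_axioms)

lemma integrable_measure_pmf_prob:
  "integrable (measure_pmf q) (\<lambda>x. measure_pmf.prob (N x) (S x))"
  by (rule measure_pmf.integrable_const_bound[where B=1]) auto

lemma measure_pmf_ratio_gt_le:
  fixes P Q :: "'a pmf"
  assumes C: "0 < C"
  shows "measure_pmf.prob Q {y. C < pmf P y / pmf Q y} \<le> 1 / C"
proof -
  let ?S = "{y. C < pmf P y / pmf Q y}"
  have pt: "pmf Q y \<le> pmf P y / C" if "y \<in> ?S" for y
  proof -
    from that C have "pmf Q y \<noteq> 0" by auto \<comment> \<open>division by zero gives 0\<close>
    then have "0 < pmf Q y" using pmf_nonneg[of Q y] by linarith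
    with that C show ?thesis by (simp add: field_simps)
  qed
  have "measure_pmf.prob Q ?S = infsetsum (pmf Q) ?S" by (rule measure_pmf_conv_infsetsum)
  also have "\<dots> \<le> infsetsum (\<lambda>y. pmf P y / C) ?S"
    by (rule infsetsum_mono)
       (use pt in \<open>auto simp: divide_inverse intro!: abs_summable_on_cmult_left\<close>)
  also have "\<dots> = infsetsum (pmf P) ?S / C" by (rule infsetsum_cdiv) auto
  also have "\<dots> = measure_pmf.prob P ?S / C" by (simp add: measure_pmf_conv_infsetsum)
  also have "\<dots> \<le> 1 / C" using C by (intro divide_right_mono) auto
  finally show ?thesis .
qed

lemma map_pmf_Pi_pmf_pair:
  assumes "finite I" "k \<in> I" "k' \<in> I" "k \<noteq> k'"
  shows "map_pmf (\<lambda>u. (u k, u k')) (Pi_pmf I d (\<lambda>_. p)) = pair_pmf p p"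
proof -
  define I' where "I' = I - {k}"
  have I: "I = insert k I'" "k \<notin> I'" "finite I'" "k' \<in> I'" using assms by (auto simp: I'_def)
  have "map_pmf (\<lambda>u. (u k, u k')) (Pi_pmf I d (\<lambda>_. p))
      = map_pmf (\<lambda>u. (u k, u k')) (map_pmf (\<lambda>(y, f). f(k := y)) (pair_pmf p (Pi_pmf I' d (\<lambda>_. p))))"
    unfolding I(1) by (subst Pi_pmf_insert) (use I in auto)
  also have "\<dots> = map_pmf (\<lambda>(a, f). (id a, f k')) (pair_pmf p (Pi_pmf I' d (\<lambda>_. p)))"
    by (simp add: pmf.map_comp o_def case_prod_unfold) (use I in \<open>intro map_pmf_cong, auto\<close>)
  also have "\<dots> = pair_pmf p (map_pmf (\<lambda>f. f k') (Pi_pmf I' d (\<lambda>_. p)))"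
    using map_pair[of id "\<lambda>f. f k'" p] by simp
  also have "\<dots> = pair_pmf p p" using Pi_pmf_component[OF I(3), of k' d "\<lambda>_. p"] I by simp
  finally show ?thesis .
qed

lemma expectation_Pi_pmf_component:
  fixes f :: "'a \<Rightarrow> real"
  assumes "finite I" "k \<in> I"
  shows "measure_pmf.expectation (Pi_pmf I d (\<lambda>_. p)) (\<lambda>u. f (u k)) = measure_pmf.expectation p f"
proof -
  have "measure_pmf.expectation (Pi_pmf I d (\<lambda>_. p)) (\<lambda>u. f (u k))
      = measure_pmf.expectation (map_pmf (\<lambda>u. u k) (Pi_pmf I d (\<lambda>_. p))) f"
    by simp
  also have "map_pmf (\<lambda>u. u k) (Pi_pmf I d (\<lambda>_. p)) = p"
    using Pi_pmf_component[OF assms(1), of k d "\<lambda>_. p"] assms(2) by simp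
  finally show ?thesis .
qed

section \<open>Expurgation\<close>

lemma measure_pmf_gt_mult_expectation_le:
  fixes X :: "'a \<Rightarrow> real"
  assumes nonneg: "\<And>x. 0 \<le> X x" and int: "integrable (measure_pmf P) X" and "0 < \<beta>"
  shows "measure_pmf.prob P {x. \<beta> * measure_pmf.expectation P X < X x} \<le> 1 / \<beta>"
proof (cases "measure_pmf.expectation P X = 0")
  case True
  then have "AE x in P. X x = 0"
    using integral_nonneg_eq_0_iff_AE[of "measure_pmf P" X] nonneg int by auto
  then have "measure_pmf.prob P {x. \<beta> * measure_pmf.expectation P X < X x} = 0"
    using True by (auto simp: AE_measure_pmf_iff measure_pmf_zero_iff)
  then show ?thesis using \<open>0 < \<beta>\<close> by simp
next
  case False
  then have pos: "0 < measure_pmf.expectation P X"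
    using integral_nonneg_AE[of X "measure_pmf P"] nonneg by (simp add: order_less_le)
  have "measure_pmf.prob P {x. \<beta> * measure_pmf.expectation P X < X x}
      \<le> measure_pmf.prob P {x \<in> space P. \<beta> * measure_pmf.expectation P X \<le> X x}"
    by (rule measure_pmf.finite_measure_mono) auto
  also have "\<dots> \<le> measure_pmf.expectation P X / (\<beta> * measure_pmf.expectation P X)"
    by (rule integral_Markov_inequality_measure[where A="{}"]) (use int nonneg pos \<open>0 < \<beta>\<close> in auto)
  also have "\<dots> = 1 / \<beta>" using pos by simp
  finally show ?thesis .
qed

lemma ex_set_pmf_less_if_expectation_less:
  fixes Z :: "'a \<Rightarrow> real"
  assumes "integrable (measure_pmf P) Z" "measure_pmf.expectation P Z < c"
  shows "\<exists>x\<in>set_pmf P. Z x < c"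
proof (rule ccontr)
  assume "\<not> ?thesis"
  then have "c \<le> measure_pmf.expectation P Z"
    by (intro measure_pmf.integral_ge_const assms(1)) (auto simp: AE_measure_pmf_iff not_less)
  with assms(2) show False by simp
qed

lemma exists_subset_bounded_by_mult_expectation:
  fixes P :: "'w pmf" and X Y :: "'i \<Rightarrow> 'w \<Rightarrow> real"
  assumes I: "finite I" and \<beta>: "0 < \<beta>" "0 < \<beta>'"
    and nonneg: "\<And>k w. 0 \<le> X k w" "\<And>k w. 0 \<le> Y k w"
    and int: "\<And>k. integrable (measure_pmf P) (X k)" "\<And>k. integrable (measure_pmf P) (Y k)"
    and L: "real L \<le> (1 - 1 / \<beta> - 1 / \<beta>') * real (card I)"
  shows "\<exists>w\<in>set_pmf P. \<exists>S\<subseteq>I. card S = L \<and> (\<forall>k\<in>S.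
           X k w \<le> \<beta> * measure_pmf.expectation P (X k) \<and>
           Y k w \<le> \<beta>' * measure_pmf.expectation P (Y k))"
proof -
  define bad where "bad k = {w. \<beta> * measure_pmf.expectation P (X k) < X k w}
    \<union> {w. \<beta>' * measure_pmf.expectation P (Y k) < Y k w}" for k
  define nbad where "nbad w = (\<Sum>k\<in>I. indicator (bad k) w :: real)" for w
  have int_bad: "integrable (measure_pmf P) (indicator (bad k) :: 'w \<Rightarrow> real)" for k
    by (auto simp: measure_pmf.emeasure_finite less_top[symmetric])
  then have int_nbad: "integrable (measure_pmf P) nbad"
    unfolding nbad_def by auto
  have "measure_pmf.expectation P nbad = (\<Sum>k\<in>I. measure_pmf.prob P (bad k))"
    unfolding nbad_def using int_bad by (subst Bochner_Integration.integral_sum) auto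
  also have "\<dots> \<le> (\<Sum>k\<in>I. 1 / \<beta> + 1 / \<beta>')"
  proof (rule sum_mono)
    fix k
    have "measure_pmf.prob P (bad k) \<le> measure_pmf.prob P {w. \<beta> * measure_pmf.expectation P (X k) < X k w}
        + measure_pmf.prob P {w. \<beta>' * measure_pmf.expectation P (Y k) < Y k w}"
      unfolding bad_def by (rule measure_subadditive) (auto simp: measure_pmf.emeasure_finite)
    then show "measure_pmf.prob P (bad k) \<le> 1 / \<beta> + 1 / \<beta>'"
      using measure_pmf_gt_mult_expectation_le[OF nonneg(1) int(1) \<beta>(1), of k]
        measure_pmf_gt_mult_expectation_le[OF nonneg(2) int(2) \<beta>(2), of k] by linarith
  qed
  also have "\<dots> < real (card I) - real L + 1" using L by (simp add: algebra_simps)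
  finally obtain w where w: "w \<in> set_pmf P" "nbad w < real (card I) - real L + 1"
    using ex_set_pmf_less_if_expectation_less[OF int_nbad] by blast
  have "nbad w = real (card {k\<in>I. w \<in> bad k})"
    using I by (simp add: nbad_def indicator_def sum.If_cases Int_def)
  moreover have "card {k\<in>I. w \<in> bad k} + card {k\<in>I. w \<notin> bad k} = card I"
    using I by (subst card_Un_disjoint[symmetric]) (auto intro: arg_cong[where f=card])
  ultimately have "L \<le> card {k\<in>I. w \<notin> bad k}" using w(2) by linarith
  then obtain S where "S \<subseteq> {k\<in>I. w \<notin> bad k}" "card S = L"
    by (meson obtain_subset_with_card_n)
  then show ?thesis using w(1) by (intro bexI[OF _ w(1)] exI[of _ S]) (auto simp: bad_def not_less)
qed

section \<open>Transmission codes by random coding\<close>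

definition decoding_set :: "('x \<Rightarrow> 'y pmf) \<Rightarrow> 'x pmf \<Rightarrow> real \<Rightarrow> 'x \<Rightarrow> 'y set" where
  "decoding_set W p C x = {y. C < pmf (W x) y / pmf (out_dist W p) y}"

lemma info_tail_eq:
  "info_tail W p C = measure_pmf.expectation p (\<lambda>x. measure_pmf.prob (W x) (- decoding_set W p C x))"
  by (simp add: info_tail_def decoding_set_def Compl_eq not_less)

lemma info_tail_nonneg: "0 \<le> info_tail W p C"
  unfolding info_tail_def by (rule integral_nonneg_AE) auto

lemma expectation_confusion_pair_le:
  fixes W :: "'x \<Rightarrow> 'y pmf"
  assumes "0 < C" "finite I" "k \<in> I" "k' \<in> I" "k \<noteq> k'"
  shows "measure_pmf.expectation (Pi_pmf I d (\<lambda>_. p))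
           (\<lambda>u. measure_pmf.prob (W (u k)) (decoding_set W p C (u k'))) \<le> 1 / C"
proof -
  let ?E = "decoding_set W p C"
  define g where "g = (\<lambda>(b, a). measure_pmf.prob (W a) (?E b))"
  have "measure_pmf.expectation (Pi_pmf I d (\<lambda>_. p)) (\<lambda>u. measure_pmf.prob (W (u k)) (?E (u k')))
      = measure_pmf.expectation (map_pmf (\<lambda>u. (u k', u k)) (Pi_pmf I d (\<lambda>_. p))) g"
    by (simp add: g_def)
  also have "\<dots> = measure_pmf.expectation (pair_pmf p p) g"
    using assms by (simp add: map_pmf_Pi_pmf_pair)
  also have "pair_pmf p p = bind_pmf p (\<lambda>b. map_pmf (Pair b) p)"
    by (simp add: pair_pmf_def map_pmf_def)
  also have "measure_pmf.expectation \<dots> g = measure_pmf.expectation p (\<lambda>b. measure_pmf.expectation (map_pmf (Pair b) p) g)"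
    by (rule expectation_bind_pmf[where B=1]) (auto simp: g_def)
  also have "\<dots> = measure_pmf.expectation p (\<lambda>b. measure_pmf.expectation p (\<lambda>a. measure_pmf.prob (W a) (?E b)))"
    by (simp add: g_def)
  also have "\<dots> = measure_pmf.expectation p (\<lambda>b. measure_pmf.prob (out_dist W p) (?E b))"
    by (simp add: out_dist_def measure_bind_pmf)
  also have "\<dots> \<le> 1 / C"
    by (intro measure_pmf.integral_le_const integrable_measure_pmf_prob AE_pmfI)
       (use measure_pmf_ratio_gt_le[OF \<open>0 < C\<close>] in \<open>simp add: decoding_set_def\<close>)
  finally show ?thesis .
qed

lemma expectation_confusion_le:
  fixes W :: "'x \<Rightarrow> 'y pmf"
  assumes "0 < C" "finite I" "k \<in> I"
  shows "measure_pmf.expectation (Pi_pmf I d (\<lambda>_. p))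
           (\<lambda>u. \<Sum>k'\<in>I - {k}. measure_pmf.prob (W (u k)) (decoding_set W p C (u k')))
         \<le> (real (card I) - 1) / C"
proof -
  have "measure_pmf.expectation (Pi_pmf I d (\<lambda>_. p))
          (\<lambda>u. \<Sum>k'\<in>I - {k}. measure_pmf.prob (W (u k)) (decoding_set W p C (u k')))
      = (\<Sum>k'\<in>I - {k}. measure_pmf.expectation (Pi_pmf I d (\<lambda>_. p))
          (\<lambda>u. measure_pmf.prob (W (u k)) (decoding_set W p C (u k'))))"
    by (rule Bochner_Integration.integral_sum) (rule integrable_measure_pmf_prob)
  also have "\<dots> \<le> (\<Sum>k'\<in>I - {k}. 1 / C)"
    by (intro sum_mono expectation_confusion_pair_le) (use assms in auto)
  also have "\<dots> = (real (card I) - 1) / C"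
    using assms card_gt_0_iff[of I] by (auto simp: card_Diff_singleton of_nat_diff Suc_le_eq)
  finally show ?thesis .
qed

definition transmission_code ::
  "('x \<Rightarrow> 'y pmf) \<Rightarrow> 'j set \<Rightarrow> ('j \<Rightarrow> 'x) \<Rightarrow> ('j \<Rightarrow> 'y set) \<Rightarrow> real \<Rightarrow> real \<Rightarrow> bool" where
  "transmission_code W J c E \<mu> \<Lambda> \<longleftrightarrow> (\<forall>j\<in>J.
     measure_pmf.prob (W (c j)) (- E j) \<le> \<mu> \<and>
     (\<Sum>j'\<in>J - {j}. measure_pmf.prob (W (c j)) (E j')) \<le> \<Lambda>)"

lemma transmission_code_reindex:
  assumes g: "bij_betw g J S" and code: "transmission_code W S c E \<mu> \<Lambda>"
  shows "transmission_code W J (\<lambda>j. c (g j)) (\<lambda>j. E (g j)) \<mu> \<Lambda>"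
  unfolding transmission_code_def
proof (intro ballI conjI)
  fix j assume j: "j \<in> J"
  then have gj: "g j \<in> S" using g by (auto simp: bij_betw_def)
  then show "measure_pmf.prob (W (c (g j))) (- E (g j)) \<le> \<mu>"
    using code by (simp add: transmission_code_def)
  have "bij_betw g (J - {j}) (S - {g j})"
    using g j gj by (intro bij_betw_DiffI) auto
  then have "(\<Sum>j'\<in>J - {j}. measure_pmf.prob (W (c (g j))) (E (g j')))
      = (\<Sum>k'\<in>S - {g j}. measure_pmf.prob (W (c (g j))) (E k'))"
    by (rule sum.reindex_bij_betw)
  also have "\<dots> \<le> \<Lambda>" using code gj by (simp add: transmission_code_def)
  finally show "(\<Sum>j'\<in>J - {j}. measure_pmf.prob (W (c (g j))) (E (g j'))) \<le> \<Lambda>" .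
qed

lemma transmission_code_subset:
  assumes "finite I" "S \<subseteq> I"
    and "\<And>k. k \<in> S \<Longrightarrow> measure_pmf.prob (W (c k)) (- E k) \<le> \<mu>"
    and "\<And>k. k \<in> S \<Longrightarrow> (\<Sum>k'\<in>I - {k}. measure_pmf.prob (W (c k)) (E k')) \<le> \<Lambda>"
  shows "transmission_code W S c E \<mu> \<Lambda>"
  unfolding transmission_code_def
proof (intro ballI conjI)
  fix k assume k: "k \<in> S"
  then show "measure_pmf.prob (W (c k)) (- E k) \<le> \<mu>" by (rule assms(3))
  have "(\<Sum>k'\<in>S - {k}. measure_pmf.prob (W (c k)) (E k'))
      \<le> (\<Sum>k'\<in>I - {k}. measure_pmf.prob (W (c k)) (E k'))"
    using assms(1,2) by (intro sum_mono2) auto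
  also have "\<dots> \<le> \<Lambda>" using k by (rule assms(4))
  finally show "(\<Sum>k'\<in>S - {k}. measure_pmf.prob (W (c k)) (E k')) \<le> \<Lambda>" .
qed

lemma transmission_code_exists:
  fixes W :: "'x \<Rightarrow> 'y pmf" and J :: "'j set"
  assumes C: "0 < C" and \<beta>: "0 < \<beta>" "0 < \<beta>'" and J: "finite J"
    and card_J: "real (card J) \<le> (1 - 1 / \<beta> - 1 / \<beta>') * real K"
  shows "\<exists>c. transmission_code W J c (\<lambda>j. decoding_set W p C (c j))
               (\<beta> * info_tail W p C) (\<beta>' * (real K - 1) / C)"
proof -
  let ?E = "decoding_set W p C"
  define P where "P = Pi_pmf {..<K} undefined (\<lambda>_. p)"
  define miss where "miss k u = measure_pmf.prob (W (u k)) (- ?E (u k))" for k and u :: "nat \<Rightarrow> 'x"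
  define conf where "conf k u = (\<Sum>k'\<in>{..<K} - {k}. measure_pmf.prob (W (u k)) (?E (u k')))"
    for k and u :: "nat \<Rightarrow> 'x"
  have int: "integrable (measure_pmf P) (miss k)" "integrable (measure_pmf P) (conf k)" for k
    unfolding miss_def[abs_def] conf_def[abs_def] by (auto intro: integrable_measure_pmf_prob)
  obtain u S where S: "S \<subseteq> {..<K}" "card S = card J" and good: "\<forall>k\<in>S.
      miss k u \<le> \<beta> * measure_pmf.expectation P (miss k) \<and>
      conf k u \<le> \<beta>' * measure_pmf.expectation P (conf k)"
    using exists_subset_bounded_by_mult_expectation[of "{..<K}" \<beta> \<beta>' miss conf P "card J", OF _ \<beta> _ _ int] card_J
    by (auto simp: miss_def conf_def sum_nonneg)
  have E_miss: "measure_pmf.expectation P (miss k) = info_tail W p C" if "k < K" for k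
    using expectation_Pi_pmf_component[of "{..<K}" k undefined p "\<lambda>x. measure_pmf.prob (W x) (- ?E x)"] that
    by (simp add: P_def miss_def[abs_def] info_tail_eq)
  have E_conf: "measure_pmf.expectation P (conf k) \<le> (real K - 1) / C" if "k < K" for k
    using expectation_confusion_le[OF C, of "{..<K}" k undefined p W] that
    by (simp add: P_def conf_def[abs_def])
  have code: "transmission_code W S u (\<lambda>k. ?E (u k)) (\<beta> * info_tail W p C) (\<beta>' * (real K - 1) / C)"
  proof (rule transmission_code_subset[of "{..<K}"])
    fix k assume "k \<in> S"
    then have k: "k < K" and good_k: "miss k u \<le> \<beta> * measure_pmf.expectation P (miss k)"
        "conf k u \<le> \<beta>' * measure_pmf.expectation P (conf k)"
      using S(1) good by auto
    show "measure_pmf.prob (W (u k)) (- ?E (u k)) \<le> \<beta> * info_tail W p C"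
      using good_k(1) E_miss[OF k] by (simp add: miss_def)
    have "conf k u \<le> \<beta>' * ((real K - 1) / C)"
      using good_k(2) mult_left_mono[OF E_conf[OF k], of \<beta>'] \<beta>(2) by linarith
    then show "(\<Sum>k'\<in>{..<K} - {k}. measure_pmf.prob (W (u k)) (?E (u k'))) \<le> \<beta>' * (real K - 1) / C"
      by (simp add: conf_def)
  qed (use S(1) in auto)
  obtain g where g: "bij_betw g J S"
    using finite_same_card_bij[OF J _ S(2)[symmetric]] finite_subset[OF S(1)] by blast
  show ?thesis
    using transmission_code_reindex[OF g code] by (rule exI[of _ "\<lambda>j. u (g j)"])
qed

section \<open>Concatenated identification codes\<close>

definition concat_input :: "('c \<times> 'a \<Rightarrow> 'x) \<Rightarrow> 'c set \<Rightarrow> ('c \<Rightarrow> 'a) \<Rightarrow> 'x pmf" where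
  "concat_input c Pos w = map_pmf (\<lambda>i. c (i, w i)) (pmf_of_set Pos)"

definition concat_decoder :: "('c \<times> 'a \<Rightarrow> 'y set) \<Rightarrow> 'c set \<Rightarrow> ('c \<Rightarrow> 'a) \<Rightarrow> 'y set" where
  "concat_decoder E Pos w = (\<Union>i\<in>Pos. E (i, w i))"

lemma measure_out_dist_concat_input:
  assumes "finite Pos" "Pos \<noteq> {}"
  shows "measure_pmf.prob (out_dist W (concat_input c Pos w)) S
       = (\<Sum>i\<in>Pos. measure_pmf.prob (W (c (i, w i))) S) / real (card Pos)"
  using assms
  by (simp add: out_dist_def concat_input_def bind_map_pmf measure_bind_pmf integral_pmf_of_set)

lemma concat_miss_le:
  assumes code: "transmission_code W J c E \<mu> \<Lambda>" and Pos: "finite Pos" "Pos \<noteq> {}"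
    and w: "\<And>i. i \<in> Pos \<Longrightarrow> (i, w i) \<in> J"
  shows "measure_pmf.prob (out_dist W (concat_input c Pos w)) (- concat_decoder E Pos w) \<le> \<mu>"
proof -
  have "measure_pmf.prob (W (c (i, w i))) (- concat_decoder E Pos w) \<le> \<mu>" if "i \<in> Pos" for i
  proof -
    have "measure_pmf.prob (W (c (i, w i))) (- concat_decoder E Pos w)
        \<le> measure_pmf.prob (W (c (i, w i))) (- E (i, w i))"
      using that by (intro measure_pmf.finite_measure_mono) (auto simp: concat_decoder_def)
    also have "\<dots> \<le> \<mu>" using code w[OF that] by (simp add: transmission_code_def)
    finally show ?thesis .
  qed
  then have "(\<Sum>i\<in>Pos. measure_pmf.prob (W (c (i, w i))) (- concat_decoder E Pos w)) \<le> real (card Pos) * \<mu>"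
    by (rule sum_bounded_above)
  then show ?thesis using Pos by (simp add: measure_out_dist_concat_input divide_le_eq mult.commute)
qed

lemma concat_confusion_le:
  assumes code: "transmission_code W J c E \<mu> \<Lambda>" and "finite J" and Pos: "finite Pos" "Pos \<noteq> {}"
    and w: "\<And>i. i \<in> Pos \<Longrightarrow> (i, w i) \<in> J" "\<And>i. i \<in> Pos \<Longrightarrow> (i, w' i) \<in> J"
    and agree: "real (card {i\<in>Pos. w i = w' i}) \<le> \<kappa> * real (card Pos)" and "0 \<le> \<Lambda>"
  shows "measure_pmf.prob (out_dist W (concat_input c Pos w')) (concat_decoder E Pos w) \<le> \<kappa> + \<Lambda>"
proof -
  define A where "A = {i\<in>Pos. w i = w' i}"
  have each: "measure_pmf.prob (W (c (i, w' i))) (concat_decoder E Pos w) \<le> indicator A i + \<Lambda>"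
    if i: "i \<in> Pos" for i
  proof (cases "i \<in> A")
    case True
    then show ?thesis using \<open>0 \<le> \<Lambda>\<close> by (simp add: add_increasing2)
  next
    case False
    have inj: "inj_on (\<lambda>i'. (i', w i')) Pos" by (rule inj_onI) simp
    have sub: "(\<lambda>i'. (i', w i')) ` Pos \<subseteq> J - {(i, w' i)}"
      using False i w(1) by (auto simp: A_def)
    have "measure_pmf.prob (W (c (i, w' i))) (concat_decoder E Pos w)
        \<le> (\<Sum>i'\<in>Pos. measure_pmf.prob (W (c (i, w' i))) (E (i', w i')))"
      unfolding concat_decoder_def by (rule measure_pmf.finite_measure_subadditive_finite) (auto simp: Pos)
    also have "\<dots> = (\<Sum>j'\<in>(\<lambda>i'. (i', w i')) ` Pos. measure_pmf.prob (W (c (i, w' i))) (E j'))"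
      by (simp add: sum.reindex[OF inj])
    also have "\<dots> \<le> (\<Sum>j'\<in>J - {(i, w' i)}. measure_pmf.prob (W (c (i, w' i))) (E j'))"
      by (rule sum_mono2) (use sub \<open>finite J\<close> in auto)
    also have "\<dots> \<le> \<Lambda>" using code w(2)[OF i] by (simp add: transmission_code_def)
    finally show ?thesis using False by simp
  qed
  have "(\<Sum>i\<in>Pos. measure_pmf.prob (W (c (i, w' i))) (concat_decoder E Pos w))
      \<le> (\<Sum>i\<in>Pos. indicator A i + \<Lambda>)"
    by (rule sum_mono) (rule each)
  also have "\<dots> = real (card A) + real (card Pos) * \<Lambda>"
    using Pos by (simp add: sum.distrib indicator_def sum.If_cases A_def Int_def)
  also have "\<dots> \<le> (\<kappa> + \<Lambda>) * real (card Pos)" using agree by (simp add: A_def algebra_simps)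
  finally show ?thesis using Pos by (simp add: measure_out_dist_concat_input divide_le_eq)
qed

lemma id_mu_le:
  assumes "\<And>i. i \<in> {1..N} \<Longrightarrow> measure_pmf.prob (out_dist W (Q i)) (- D i) \<le> B" "0 \<le> B"
  shows "id_mu W N Q D \<le> B"
  unfolding id_mu_def using assms by (subst Max_le_iff) auto

lemma id_lambda_le:
  assumes "\<And>i j. i \<in> {1..N} \<Longrightarrow> j \<in> {1..N} \<Longrightarrow> i \<noteq> j \<Longrightarrow>
      measure_pmf.prob (out_dist W (Q j)) (D i) \<le> B"
    and "0 \<le> B"
  shows "id_lambda W N Q D \<le> B"
proof -
  have "{measure_pmf.prob (out_dist W (Q j)) (D i) | i j. i \<in> {1..N} \<and> j \<in> {1..N} \<and> i \<noteq> j}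
      \<subseteq> (\<lambda>(i, j). measure_pmf.prob (out_dist W (Q j)) (D i)) ` ({1..N} \<times> {1..N})"
    by auto
  then have "finite {measure_pmf.prob (out_dist W (Q j)) (D i) | i j. i \<in> {1..N} \<and> j \<in> {1..N} \<and> i \<noteq> j}"
    by (rule finite_subset) simp
  then show ?thesis unfolding id_lambda_def using assms by (subst Max_le_iff) auto
qed

lemma concatenated_id_code:
  assumes code: "transmission_code W J c E \<mu> \<Lambda>" and "finite J" "finite Pos" "Pos \<noteq> {}"
    and words: "\<And>k i. k \<in> {1..N} \<Longrightarrow> i \<in> Pos \<Longrightarrow> (i, w k i) \<in> J"
    and agree: "\<And>k l. k \<in> {1..N} \<Longrightarrow> l \<in> {1..N} \<Longrightarrow> k \<noteq> l \<Longrightarrow>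
                  real (card {i\<in>Pos. w k i = w l i}) \<le> \<kappa> * real (card Pos)"
    and "0 \<le> \<mu>" "0 \<le> \<kappa>" "0 \<le> \<Lambda>"
  shows "id_mu W N (\<lambda>k. concat_input c Pos (w k)) (\<lambda>k. concat_decoder E Pos (w k)) \<le> \<mu>"
    and "id_lambda W N (\<lambda>k. concat_input c Pos (w k)) (\<lambda>k. concat_decoder E Pos (w k)) \<le> \<kappa> + \<Lambda>"
  using assms by (auto intro!: id_mu_le id_lambda_le concat_miss_le concat_confusion_le)

section \<open>Outer codes with few agreements\<close>

lemma card_PiE_agreeing_le:
  assumes Pos: "finite Pos" and A: "finite A" and w: "w \<in> Pos \<rightarrow>\<^sub>E A"
  shows "card {w'\<in>Pos \<rightarrow>\<^sub>E A. s \<le> card {i\<in>Pos. w i = w' i}} \<le> 2 ^ card Pos * card A ^ (card Pos - s)"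
proof -
  let ?SS = "{S. S \<subseteq> Pos \<and> card S = s}"
  define B where "B S = PiE Pos (\<lambda>i. if i \<in> S then {w i} else A)" for S
  have sub: "{w'\<in>Pos \<rightarrow>\<^sub>E A. s \<le> card {i\<in>Pos. w i = w' i}} \<subseteq> (\<Union>S\<in>?SS. B S)"
  proof
    fix w' assume "w' \<in> {w'\<in>Pos \<rightarrow>\<^sub>E A. s \<le> card {i\<in>Pos. w i = w' i}}"
    then have w': "w' \<in> Pos \<rightarrow>\<^sub>E A" and "s \<le> card {i\<in>Pos. w i = w' i}" by auto
    then obtain S where S: "S \<subseteq> {i\<in>Pos. w i = w' i}" "card S = s"
      by (meson obtain_subset_with_card_n)
    then have "w' \<in> B S" using w' by (auto simp: B_def PiE_iff)
    with S show "w' \<in> (\<Union>S\<in>?SS. B S)" by blast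
  qed
  have card_B: "card (B S) = card A ^ (card Pos - s)" if "S \<in> ?SS" for S
  proof -
    have "card (B S) = (\<Prod>i\<in>Pos. card (if i \<in> S then {w i} else A))"
      unfolding B_def using Pos by (rule card_PiE)
    also have "\<dots> = (\<Prod>i\<in>Pos - S. card A)"
      using Pos that by (simp add: if_distrib prod.If_cases Diff_eq Int_absorb1)
    also have "\<dots> = card A ^ (card Pos - s)"
      using Pos that by (auto simp: card_Diff_subset finite_subset)
    finally show ?thesis .
  qed
  have fin_SS: "finite ?SS" by (rule finite_subset[of _ "Pow Pos"]) (use Pos in auto)
  have "card ?SS \<le> card (Pow Pos)" using Pos by (intro card_mono) auto
  then have card_SS: "card ?SS \<le> 2 ^ card Pos" using Pos by (simp add: card_Pow)
  have "card {w'\<in>Pos \<rightarrow>\<^sub>E A. s \<le> card {i\<in>Pos. w i = w' i}} \<le> card (\<Union>S\<in>?SS. B S)"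
    by (rule card_mono[OF _ sub]) (use fin_SS Pos A in \<open>auto simp: B_def intro!: finite_PiE\<close>)
  also have "\<dots> \<le> (\<Sum>S\<in>?SS. card (B S))" by (rule card_UN_le[OF fin_SS])
  also have "\<dots> = card ?SS * card A ^ (card Pos - s)" using card_B by simp
  also have "\<dots> \<le> 2 ^ card Pos * card A ^ (card Pos - s)" using card_SS by simp
  finally show ?thesis .
qed

lemma exists_word_few_agreements_with:
  assumes Pos: "finite Pos" and A: "finite A" and F: "F \<subseteq> Pos \<rightarrow>\<^sub>E A" and s: "s \<le> card Pos"
    and less: "card F * (2 ^ card Pos * card A ^ (card Pos - s)) < card A ^ card Pos"
  shows "\<exists>v\<in>Pos \<rightarrow>\<^sub>E A. v \<notin> F \<and>
           (\<forall>w\<in>F. card {i\<in>Pos. w i = v i} < s \<and> card {i\<in>Pos. v i = w i} < s)"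
proof -
  define ball where "ball w = {w'\<in>Pos \<rightarrow>\<^sub>E A. s \<le> card {i\<in>Pos. w i = w' i}}" for w
  have fin: "finite (Pos \<rightarrow>\<^sub>E A)" using Pos A by (intro finite_PiE)
  have fin_F: "finite F" using F fin by (rule finite_subset)
  have "card (ball w) \<le> 2 ^ card Pos * card A ^ (card Pos - s)" if "w \<in> F" for w
    unfolding ball_def by (rule card_PiE_agreeing_le[OF Pos A]) (use F that in blast)
  then have "(\<Sum>w\<in>F. card (ball w)) \<le> card F * (2 ^ card Pos * card A ^ (card Pos - s))"
    using sum_bounded_above[of F "\<lambda>w. card (ball w)"] by simp
  then have "card (\<Union>w\<in>F. ball w) < card (Pos \<rightarrow>\<^sub>E A)"
    using card_UN_le[OF fin_F, of ball] less Pos by (simp add: card_PiE)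
  moreover have "(\<Union>w\<in>F. ball w) \<subseteq> Pos \<rightarrow>\<^sub>E A" by (auto simp: ball_def)
  ultimately have "\<not> Pos \<rightarrow>\<^sub>E A \<subseteq> (\<Union>w\<in>F. ball w)"
    using card_mono[OF finite_subset[OF _ fin]] by (meson not_le)
  then obtain v where v: "v \<in> Pos \<rightarrow>\<^sub>E A" "v \<notin> (\<Union>w\<in>F. ball w)" by blast
  have far: "card {i\<in>Pos. w i = v i} < s" if "w \<in> F" for w
    using v that by (auto simp: ball_def not_le)
  moreover have "{i\<in>Pos. v i = w i} = {i\<in>Pos. w i = v i}" for w by auto
  moreover have "v \<notin> F" using far[of v] s by auto
  ultimately show ?thesis using v(1) by auto
qed

lemma exists_words_few_agreements:
  assumes Pos: "finite Pos" and A: "finite A" "A \<noteq> {}" and s: "s \<le> card Pos"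
    and N: "N * (2 ^ card Pos * card A ^ (card Pos - s)) \<le> card A ^ card Pos"
  shows "\<exists>F\<subseteq>Pos \<rightarrow>\<^sub>E A. card F = N \<and>
           (\<forall>w\<in>F. \<forall>w'\<in>F. w \<noteq> w' \<longrightarrow> card {i\<in>Pos. w i = w' i} < s)"
proof -
  have V: "0 < 2 ^ card Pos * card A ^ (card Pos - s)" using A by (simp add: card_gt_0_iff)
  have "\<exists>F\<subseteq>Pos \<rightarrow>\<^sub>E A. card F = n \<and> (\<forall>w\<in>F. \<forall>w'\<in>F. w \<noteq> w' \<longrightarrow> card {i\<in>Pos. w i = w' i} < s)"
    if "n \<le> N" for n
    using that
  proof (induction n)
    case 0
    show ?case by (intro exI[of _ "{}"]) auto
  next
    case (Suc n)
    then obtain F where F: "F \<subseteq> Pos \<rightarrow>\<^sub>E A" "card F = n"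
      "\<forall>w\<in>F. \<forall>w'\<in>F. w \<noteq> w' \<longrightarrow> card {i\<in>Pos. w i = w' i} < s" by auto
    have "card F * (2 ^ card Pos * card A ^ (card Pos - s)) < card A ^ card Pos"
      using F(2) Suc.prems V mult_less_mono1[of n N] N by (meson Suc_le_lessD order.strict_trans2)
    then obtain v where v: "v \<in> Pos \<rightarrow>\<^sub>E A" "v \<notin> F"
      "\<forall>w\<in>F. card {i\<in>Pos. w i = v i} < s \<and> card {i\<in>Pos. v i = w i} < s"
      using exists_word_few_agreements_with[OF Pos A(1) F(1) s] by blast
    have "finite F" using F(1) Pos A(1) by (meson finite_PiE finite_subset)
    then have "insert v F \<subseteq> Pos \<rightarrow>\<^sub>E A \<and> card (insert v F) = Suc n \<and>
        (\<forall>w\<in>insert v F. \<forall>w'\<in>insert v F. w \<noteq> w' \<longrightarrow> card {i\<in>Pos. w i = w' i} < s)"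
      using F v by auto
    then show ?case by blast
  qed
  then show ?thesis by blast
qed

lemma exists_word_family_few_agreements:
  assumes "finite Pos" "finite A" "A \<noteq> {}" "s \<le> card Pos"
    and "N * (2 ^ card Pos * card A ^ (card Pos - s)) \<le> card A ^ card Pos"
  shows "\<exists>w. (\<forall>k\<in>{1..N}. w k \<in> Pos \<rightarrow>\<^sub>E A) \<and>
           (\<forall>k\<in>{1..N}. \<forall>l\<in>{1..N}. k \<noteq> l \<longrightarrow> card {i\<in>Pos. w k i = w l i} < s)"
proof -
  obtain F where F: "F \<subseteq> Pos \<rightarrow>\<^sub>E A" "card F = N"
      "\<forall>w\<in>F. \<forall>w'\<in>F. w \<noteq> w' \<longrightarrow> card {i\<in>Pos. w i = w' i} < s"
    using exists_words_few_agreements[OF assms] by blast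
  have "finite F" using F(1) assms(1,2) by (meson finite_PiE finite_subset)
  then obtain e where e: "bij_betw e {1..N} F"
    using finite_same_card_bij[of "{1..N}" F] F(2) by auto
  have eF: "e k \<in> F" if "k \<in> {1..N}" for k using e that by (auto simp: bij_betw_def)
  show ?thesis
  proof (intro exI[of _ e] conjI ballI impI)
    fix k assume "k \<in> {1..N}"
    then show "e k \<in> Pos \<rightarrow>\<^sub>E A" using eF F(1) by blast
  next
    fix k l assume kl: "k \<in> {1..N}" "l \<in> {1..N}" "k \<noteq> l"
    then have "e k \<noteq> e l" using inj_onD[OF bij_betw_imp_inj_on[OF e]] by blast
    then show "card {i\<in>Pos. e k i = e l i} < s"
      by (rule F(3)[rule_format, OF eF[OF kl(1)] eF[OF kl(2)]])
  qed
qed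

lemma exp_tau_div_le_exp_div:
  fixes \<tau> :: real and M b :: nat
  assumes M: "0 < M" and b: "0 < b" "\<tau> * real b \<le> 1"
  shows "exp (\<tau> * real M) / (real M * exp 1) \<le> exp (real (M div b))"
proof -
  have "M < M div b * b + b" using div_mult_mod_eq[of M b] mod_less_divisor[OF b(1), of M] by linarith
  then have "real M / real b < real (M div b) + 1"
    using b(1) by (simp add: divide_less_eq algebra_simps flip: of_nat_mult of_nat_add)
  moreover have "\<tau> * real M \<le> real M / real b"
    using b mult_right_mono[OF b(2), of "real M / real b"] by simp
  ultimately have exponent: "\<tau> * real M - 1 \<le> real (M div b)" by linarith
  have "exp (\<tau> * real M) / (real M * exp 1) \<le> exp (\<tau> * real M) / exp 1"
    using M by (intro divide_left_mono) auto
  also have "\<dots> = exp (\<tau> * real M - 1)" by (simp add: exp_diff)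
  also have "\<dots> \<le> exp (real (M div b))" using exponent by simp
  finally show ?thesis .
qed

lemma words_few_agreements_condition:
  fixes \<kappa> :: real and N m s b :: nat
  assumes b: "1 \<le> b" and base: "2 * exp 1 \<le> real b powr \<kappa>"
    and N: "real N \<le> exp (real m)" and s: "\<kappa> * real m \<le> real s" "s \<le> m"
  shows "N * (2 ^ m * b ^ (m - s)) \<le> b ^ m"
proof -
  have "real N * 2 ^ m \<le> exp (real m) * 2 ^ m" using N by simp
  also have "\<dots> = (2 * exp 1) ^ m"
    by (simp add: exp_of_nat_mult[symmetric] power_mult_distrib mult.commute)
  also have "\<dots> \<le> (real b powr \<kappa>) ^ m" using base by (intro power_mono) auto
  also have "\<dots> = real b powr (\<kappa> * real m)"
    using b by (simp add: powr_realpow[symmetric] powr_powr)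
  also have "\<dots> \<le> real b powr real s" using b s by (intro powr_mono) auto
  also have "\<dots> = real b ^ s" using b by (simp add: powr_realpow)
  finally have "real N * 2 ^ m * real b ^ (m - s) \<le> real b ^ s * real b ^ (m - s)"
    by (rule mult_right_mono) simp
  also have "\<dots> = real b ^ m" using s(2) by (simp flip: power_add)
  finally have "real (N * (2 ^ m * b ^ (m - s))) \<le> real (b ^ m)" by (simp add: mult.assoc)
  then show ?thesis by (simp only: of_nat_le_iff)
qed

lemma floor_inverse_bounds:
  fixes \<tau> :: real
  assumes "0 < \<tau>" "\<tau> < 1 / 3"
  shows "1 / \<tau> - 1 \<le> real (nat \<lfloor>1 / \<tau>\<rfloor>)" "\<tau> * real (nat \<lfloor>1 / \<tau>\<rfloor>) \<le> 1" "3 \<le> nat \<lfloor>1 / \<tau>\<rfloor>"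
proof -
  have "3 < 1 / \<tau>" using assms by (simp add: field_simps)
  then have "3 \<le> \<lfloor>1 / \<tau>\<rfloor>" by (simp add: le_floor_iff)
  then have eq: "real (nat \<lfloor>1 / \<tau>\<rfloor>) = real_of_int \<lfloor>1 / \<tau>\<rfloor>"
    by (intro of_nat_nat) linarith
  show "1 / \<tau> - 1 \<le> real (nat \<lfloor>1 / \<tau>\<rfloor>)" unfolding eq by linarith
  have "real_of_int \<lfloor>1 / \<tau>\<rfloor> \<le> 1 / \<tau>" by linarith
  then show "\<tau> * real (nat \<lfloor>1 / \<tau>\<rfloor>) \<le> 1"
    unfolding eq using mult_left_mono[of _ "1 / \<tau>" \<tau>] assms by simp
  show "3 \<le> nat \<lfloor>1 / \<tau>\<rfloor>" using \<open>3 \<le> \<lfloor>1 / \<tau>\<rfloor>\<close> by linarith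
qed

lemma floor_mult_succ_bounds:
  fixes \<kappa> :: real and m :: nat
  assumes "0 \<le> \<kappa>" "\<kappa> < 1" "0 < m"
  shows "\<kappa> * real m \<le> real (nat \<lfloor>\<kappa> * real m\<rfloor> + 1)" "nat \<lfloor>\<kappa> * real m\<rfloor> + 1 \<le> m"
    and "\<And>a. a < nat \<lfloor>\<kappa> * real m\<rfloor> + 1 \<Longrightarrow> real a \<le> \<kappa> * real m"
proof -
  have nonneg: "0 \<le> \<lfloor>\<kappa> * real m\<rfloor>" using assms by simp
  then show "\<kappa> * real m \<le> real (nat \<lfloor>\<kappa> * real m\<rfloor> + 1)" by linarith
  have "\<kappa> * real m < real m" using assms by simp
  then have "\<lfloor>\<kappa> * real m\<rfloor> < int m" by (simp add: floor_less_iff)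
  then show "nat \<lfloor>\<kappa> * real m\<rfloor> + 1 \<le> m" using nonneg by (simp add: Suc_le_eq nat_less_iff)
  fix a :: nat
  assume "a < nat \<lfloor>\<kappa> * real m\<rfloor> + 1"
  then have "int a \<le> \<lfloor>\<kappa> * real m\<rfloor>" using nonneg by linarith
  then show "real a \<le> \<kappa> * real m" by (simp add: le_floor_iff)
qed

lemma two_exp_le_floor_inverse_powr:
  fixes \<tau> \<kappa> :: real
  assumes \<tau>: "0 < \<tau>" "\<tau> < 1 / 3" and "0 < \<kappa>" and cond: "ln 2 + 1 < \<kappa> * ln (1 / \<tau> - 1)"
  shows "2 * exp 1 \<le> real (nat \<lfloor>1 / \<tau>\<rfloor>) powr \<kappa>"
proof -
  let ?b = "real (nat \<lfloor>1 / \<tau>\<rfloor>)"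
  note b = floor_inverse_bounds[OF \<tau>]
  have "3 < 1 / \<tau>" using \<tau> by (simp add: field_simps)
  then have pos: "0 < 1 / \<tau> - 1" "0 < ?b" using b(1) by linarith+
  then have "\<kappa> * ln (1 / \<tau> - 1) \<le> \<kappa> * ln ?b" using b(1) \<open>0 < \<kappa>\<close> by simp
  have "2 * exp 1 = exp (ln 2 + 1 :: real)" by (simp add: exp_add)
  also have "\<dots> \<le> exp (\<kappa> * ln ?b)" using cond \<open>\<kappa> * ln (1 / \<tau> - 1) \<le> \<kappa> * ln ?b\<close> by simp
  also have "\<dots> = ?b powr \<kappa>" using pos(2) by (simp add: powr_def)
  finally show ?thesis .
qed

lemma exists_outer_code:
  fixes \<tau> \<kappa> :: real and M N :: nat
  assumes \<tau>: "0 < \<tau>" "\<tau> < 1 / 3" and \<kappa>: "0 < \<kappa>" "\<kappa> < 1"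
    and cond: "ln 2 + 1 < \<kappa> * ln (1 / \<tau> - 1)"
    and M: "0 < M" and N: "2 \<le> N" "real N \<le> exp (\<tau> * real M) / (real M * exp 1)"
  shows "\<exists>m b w. 0 < m \<and> m * b \<le> M \<and> (\<forall>k\<in>{1..N}. \<forall>i<m. w k i < b) \<and>
           (\<forall>k\<in>{1..N}. \<forall>l\<in>{1..N}. k \<noteq> l \<longrightarrow>
              real (card {i\<in>{..<m}. w k i = w l i}) \<le> \<kappa> * real m)"
proof -
  define b where "b = nat \<lfloor>1 / \<tau>\<rfloor>"
  define m where "m = M div b"
  define s where "s = nat \<lfloor>\<kappa> * real m\<rfloor> + 1"
  note b = floor_inverse_bounds[OF \<tau>, folded b_def]
  have N_exp: "real N \<le> exp (real m)"
    using N(2) exp_tau_div_le_exp_div[OF M, of b \<tau>] b by (simp add: m_def)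
  then have m: "0 < m" using N(1) by (intro Nat.gr0I) simp
  note s = floor_mult_succ_bounds[OF less_imp_le[OF \<kappa>(1)] \<kappa>(2) m, folded s_def]
  have base: "2 * exp 1 \<le> real b powr \<kappa>"
    unfolding b_def using two_exp_le_floor_inverse_powr[OF \<tau> \<kappa>(1) cond] .
  have "N * (2 ^ m * b ^ (m - s)) \<le> b ^ m"
    using b(3) by (intro words_few_agreements_condition[OF _ base N_exp s(1,2)]) simp
  then obtain w where w: "\<forall>k\<in>{1..N}. w k \<in> {..<m} \<rightarrow>\<^sub>E {..<b}"
      and agree: "\<forall>k\<in>{1..N}. \<forall>l\<in>{1..N}. k \<noteq> l \<longrightarrow> card {i\<in>{..<m}. w k i = w l i} < s"
    using exists_word_family_few_agreements[of "{..<m}" "{..<b}" s N] s(2) b(3)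
    by (auto simp: lessThan_empty_iff)
  have "m * b \<le> M" by (simp add: m_def)
  moreover have "\<forall>k\<in>{1..N}. \<forall>i<m. w k i < b" using w by (auto simp: PiE_iff)
  moreover have "\<forall>k\<in>{1..N}. \<forall>l\<in>{1..N}. k \<noteq> l \<longrightarrow> real (card {i\<in>{..<m}. w k i = w l i}) \<le> \<kappa> * real m"
    using agree s(3) by blast
  ultimately show ?thesis using m by blast
qed

section \<open>The identification code\<close>

lemma id_code_exists:
  fixes W :: "'x \<Rightarrow> 'y pmf" and \<tau> \<kappa> \<beta> \<beta>' C :: real and M N K :: nat
  assumes \<tau>: "0 < \<tau>" "\<tau> < 1 / 3" and \<kappa>: "0 < \<kappa>" "\<kappa> < 1"
    and cond: "ln 2 + 1 < \<kappa> * ln (1 / \<tau> - 1)"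
    and C: "0 < C" and \<beta>: "0 < \<beta>" "0 < \<beta>'" and M: "0 < M"
    and K: "real M \<le> (1 - 1 / \<beta> - 1 / \<beta>') * real K" "1 \<le> K"
    and N: "real N \<le> exp (\<tau> * real M) / (real M * exp 1)"
  shows "\<exists>Q D. id_mu W N Q D \<le> \<beta> * info_tail W p C \<and>
                id_lambda W N Q D \<le> \<kappa> + \<beta>' * (real K - 1) / C"
proof (cases "N \<le> 1")
  case True
  then show ?thesis using info_tail_nonneg[of W p C] K(2) \<beta> \<kappa> C
    by (intro exI[of _ "\<lambda>_. p"] exI[of _ "\<lambda>_. UNIV"] conjI id_mu_le id_lambda_le) auto
next
  case False
  then obtain m b w where m: "0 < m" "m * b \<le> M" and w: "\<forall>k\<in>{1..N}. \<forall>i<m. w k i < b"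
    and agree: "\<forall>k\<in>{1..N}. \<forall>l\<in>{1..N}. k \<noteq> l \<longrightarrow>
                  real (card {i\<in>{..<m}. w k i = w l i}) \<le> \<kappa> * real m"
    using exists_outer_code[OF \<tau> \<kappa> cond M _ N] by auto
  have "real (card ({..<m} \<times> {..<b})) \<le> (1 - 1 / \<beta> - 1 / \<beta>') * real K"
    using m(2) K(1) by (simp add: card_cartesian_product flip: of_nat_mult)
  then have "\<exists>c. transmission_code W ({..<m} \<times> {..<b}) c (\<lambda>j. decoding_set W p C (c j))
      (\<beta> * info_tail W p C) (\<beta>' * (real K - 1) / C)"
    by (intro transmission_code_exists C \<beta>) auto
  then obtain c where c: "transmission_code W ({..<m} \<times> {..<b}) c (\<lambda>j. decoding_set W p C (c j))
      (\<beta> * info_tail W p C) (\<beta>' * (real K - 1) / C)" ..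
  show ?thesis
    using concatenated_id_code[OF c, of "{..<m}" N w \<kappa>] m w agree info_tail_nonneg[of W p C] K(2) \<beta> \<kappa> C
    by auto
qed

theorem theorem1:
  fixes \<alpha> \<alpha>' \<beta> \<beta>' \<tau> \<kappa> :: real
  assumes "\<alpha> > 0" "\<alpha>' > 0" "\<beta> > 0" "\<beta>' > 0" "\<tau> > 0" "\<kappa> > 0"
    and "\<kappa> * ln (1 / \<tau> - 1) > ln 2 + 1"
    and "\<tau> < 1 / 3" and "\<kappa> < 1"
    and "1 / \<alpha> + 1 / \<alpha>' < 1"
    and "1 - 1 / \<beta> - 1 / \<beta>' > 0"
  shows "\<forall>(M::nat) (C::real) (W :: 'x::countable \<Rightarrow> 'y::countable pmf) (p :: 'x pmf).
     M > 0 \<longrightarrow> C > 0 \<longrightarrow>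
     \<beta> * info_tail W p C
       + \<alpha>' * \<beta>' * (1 / C) * real_of_int \<lceil>real M / (1 - 1 / \<beta> - 1 / \<beta>')\<rceil> < 1 \<longrightarrow>
     (\<exists>(N::nat) (Q :: nat \<Rightarrow> 'x pmf) (D :: nat \<Rightarrow> 'y set).
        id_mu W N Q D \<le> \<alpha> * \<beta> * info_tail W p C
      \<and> id_lambda W N Q D \<le> \<kappa> + \<alpha>' * \<beta>' * (1 / C)
            * real_of_int \<lceil>real M / (1 - 1 / \<beta> - 1 / \<beta>')\<rceil>
      \<and> int N = \<lfloor>exp (\<tau> * real M) / (real M * exp 1)\<rfloor>)"
proof (intro allI impI)
  fix M :: nat and C :: real and W :: "'x \<Rightarrow> 'y pmf" and p :: "'x pmf"
  assume M: "M > 0" and C: "C > 0"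
  define \<gamma> where "\<gamma> = 1 - 1 / \<beta> - 1 / \<beta>'"
  define K where "K = nat \<lceil>real M / \<gamma>\<rceil>"
  define N where "N = nat \<lfloor>exp (\<tau> * real M) / (real M * exp 1)\<rfloor>"
  have \<gamma>: "0 < \<gamma>" using assms(11) by (simp add: \<gamma>_def)
  then have "0 < real M / \<gamma>" using M by simp
  then have K: "real_of_int \<lceil>real M / \<gamma>\<rceil> = real K" "1 \<le> K" by (simp_all add: K_def le_nat_iff)
  have "real M \<le> \<gamma> * real K"
    using le_of_int_ceiling[of "real M / \<gamma>"] \<gamma> K(1) by (simp add: divide_le_eq mult.commute)
  moreover have N: "int N = \<lfloor>exp (\<tau> * real M) / (real M * exp 1)\<rfloor>"
      "real N \<le> exp (\<tau> * real M) / (real M * exp 1)"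
    by (simp_all add: N_def)
  ultimately obtain Q D where QD: "id_mu W N Q D \<le> \<beta> * info_tail W p C"
      "id_lambda W N Q D \<le> \<kappa> + \<beta>' * (real K - 1) / C"
    using id_code_exists[OF assms(5,8,6,9,7) C assms(3,4) M _ K(2) N(2)] unfolding \<gamma>_def by blast
  have "1 < \<alpha>" "1 < \<alpha>'"
    using assms(1,2,10) by (smt (verit) divide_less_eq_1_pos divide_pos_pos)+
  then have "\<beta> * info_tail W p C \<le> \<alpha> * \<beta> * info_tail W p C"
    using mult_right_mono[of 1 \<alpha> "\<beta> * info_tail W p C"] info_tail_nonneg[of W p C] assms(3) by simp
  moreover have "\<beta>' * (real K - 1) / C \<le> \<alpha>' * \<beta>' * (1 / C) * real K"
    using mult_right_mono[of 1 \<alpha>' "\<beta>' * real K"] \<open>1 < \<alpha>'\<close> assms(4) C divide_right_mono[of _ _ C]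
    by fastforce
  ultimately show "\<exists>N Q D. id_mu W N Q D \<le> \<alpha> * \<beta> * info_tail W p C
      \<and> id_lambda W N Q D \<le> \<kappa> + \<alpha>' * \<beta>' * (1 / C) * real_of_int \<lceil>real M / (1 - 1 / \<beta> - 1 / \<beta>')\<rceil>
      \<and> int N = \<lfloor>exp (\<tau> * real M) / (real M * exp 1)\<rfloor>"
    using QD N(1) unfolding \<gamma>_def[symmetric] K(1) by (intro exI[of _ N] exI[of _ Q] exI[of _ D]) auto
qed

end
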